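(* Let $m=n+1$. Then every instance with $n$ agents with monotone valuations and $m$ goods has at least $n$ EFX allocations, and there exists an instance with $n$ agents with additive valuations and $m$ goods that has exactly $n$ EFX allocations. *)

theory Defs
  imports Complex_Main
begin

definition monotone_valuation :: "nat set \<Rightarrow> (nat set \<Rightarrow> real) \<Rightarrow> bool" where
  "monotone_valuation M val \<longleftrightarrow> val {} = 0 \<and> (\<forall>S T. S \<subseteq> T \<and> T \<subseteq> M \<longrightarrow> val S \<le> val T)"

definition additive_valuation :: "nat set \<Rightarrow> (nat set \<Rightarrow> real) \<Rightarrow> bool" where
  "additive_valuation M val \<longleftrightarrow> (\<forall>g\<in>M. val {g} \<ge> 0) \<and> (\<forall>S. S \<subseteq> M \<longrightarrow> val S = (\<Sum>g\<in>S. val {g}))"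

(* A (complete) allocation: a partition of the goods {0..<m} into bundles A 0, ..., A (n-1);
   bundles of non-agents are empty so that allocations are counted exactly once. *)
definition allocation :: "nat \<Rightarrow> nat \<Rightarrow> (nat \<Rightarrow> nat set) \<Rightarrow> bool" where
  "allocation n m A \<longleftrightarrow>
     (\<forall>i<n. A i \<subseteq> {0..<m}) \<and>
     (\<forall>i<n. \<forall>j<n. i \<noteq> j \<longrightarrow> A i \<inter> A j = {}) \<and>
     (\<Union>i<n. A i) = {0..<m} \<and>
     (\<forall>i. i \<ge> n \<longrightarrow> A i = {})"

definition EFX :: "nat \<Rightarrow> (nat \<Rightarrow> nat set \<Rightarrow> real) \<Rightarrow> (nat \<Rightarrow> nat set) \<Rightarrow> bool" where
  "EFX n v A \<longleftrightarrow> (\<forall>i<n. \<forall>j<n. i \<noteq> j \<longrightarrow> (\<forall>g\<in>A j. v i (A i) \<ge> v i (A j - {g})))"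

definition EFX_allocations :: "nat \<Rightarrow> nat \<Rightarrow> (nat \<Rightarrow> nat set \<Rightarrow> real) \<Rightarrow> (nat \<Rightarrow> nat set) set" where
  "EFX_allocations n m v = {A. allocation n m A \<and> EFX n v A}"

end

theory Submission
  imports Defs
begin

(* Lower bound: fix an agent k and let the other n - 1 agents, one after another, take a
   most valued remaining good; k receives the two goods left over. Every other agent
   envies k's bundle by at most a good that was still available at its own turn, and k
   envies nobody after removing a good from a singleton. The n choices of k give n
   different allocations.
   Upper bound: agent i values good i at 3, the extra good n at 2 and every other good at 1.
   As nonempty sets have positive value, no EFX allocation leaves an agent empty-handed,
   so it consists of a pair, held by some k, and n - 1 singletons. If the pair contained a
   good h < n with h \<noteq> k, agent h would value the pair minus its other good at 3, more
   than its own singleton; hence the pair is {k, n}, and then every other agent i must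
   hold {i}. *)

lemma finite_EFX_allocations: "finite (EFX_allocations n m v)"
proof (rule finite_subset)
  show "EFX_allocations n m v \<subseteq>
      {A. \<forall>i. (i \<in> {..<n} \<longrightarrow> A i \<in> Pow {0..<m}) \<and> (i \<notin> {..<n} \<longrightarrow> A i = {})}"
    unfolding EFX_allocations_def allocation_def by auto
  show "finite {A. \<forall>i. (i \<in> {..<n} \<longrightarrow> A i \<in> Pow {0..<m}) \<and> (i \<notin> {..<n} \<longrightarrow> A i = {})}"
    by (rule finite_set_of_finite_funs) auto
qed

lemma allocation_finite_bundle:
  assumes "allocation n m A"
  shows "finite (A i)"
  using assms finite_subset[of "A i" "{0..<m}"] unfolding allocation_def
  by (cases "i < n") auto

lemma allocation_sum_card:
  assumes "allocation n m A"
  shows "(\<Sum>i<n. card (A i)) = m"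
proof -
  have "card (\<Union>i<n. A i) = (\<Sum>i<n. card (A i))"
    using assms by (intro card_UN_disjoint) (auto simp: allocation_finite_bundle allocation_def)
  then show ?thesis
    using assms by (simp add: allocation_def)
qed

lemma serial_dictatorship:
  fixes u :: "'a \<Rightarrow> 'b \<Rightarrow> 'c::linorder"
  assumes "finite I" "finite G" "card I \<le> card G"
  shows "\<exists>f. inj_on f I \<and> f ` I \<subseteq> G \<and> (\<forall>i\<in>I. \<forall>g\<in>G - f ` I. u i g \<le> u i (f i))"
  using assms
proof (induction I arbitrary: G rule: finite_induct)
  case empty
  then show ?case by simp
next
  case (insert x I)
  then have "G \<noteq> {}" by auto
  then obtain g0 where g0: "g0 \<in> G" "u x g0 = Max (u x ` G)"
    using \<open>finite G\<close> by (metis Max_in finite_imageI image_iff image_is_empty)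
  then have best: "\<forall>g\<in>G. u x g \<le> u x g0"
    using \<open>finite G\<close> by simp
  have "card I \<le> card (G - {g0})"
    using insert g0(1) by simp
  then obtain f where f: "inj_on f I" "f ` I \<subseteq> G - {g0}"
      "\<forall>i\<in>I. \<forall>g\<in>G - {g0} - f ` I. u i g \<le> u i (f i)"
    using insert.IH[of "G - {g0}"] \<open>finite G\<close> by blast
  have image: "f(x := g0) ` I = f ` I"
    using insert.hyps by auto
  have "inj_on (f(x := g0)) (insert x I)"
    using f(1,2) insert.hyps by (auto simp: inj_on_def)
  moreover have "f(x := g0) ` insert x I \<subseteq> G"
    using f(2) g0(1) image by auto
  moreover have "\<forall>i\<in>insert x I. \<forall>g\<in>G - f(x := g0) ` insert x I. u i g \<le> u i ((f(x := g0)) i)"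
    using f(3) best image insert.hyps by auto
  ultimately show ?case by blast
qed

lemma sum_eq_Suc_card_imp_one_pair:
  fixes c :: "'a \<Rightarrow> nat"
  assumes "finite I" "\<forall>i\<in>I. 1 \<le> c i" "(\<Sum>i\<in>I. c i) = Suc (card I)"
  shows "\<exists>k\<in>I. c k = 2 \<and> (\<forall>i\<in>I. i \<noteq> k \<longrightarrow> c i = 1)"
proof -
  have "(\<Sum>i\<in>I. c i - 1) = 1"
    using assms by (simp add: sum_subtractf_nat)
  then obtain k where k: "k \<in> I" "c k - 1 = 1" "\<forall>i\<in>I. k \<noteq> i \<longrightarrow> c i - 1 = 0"
    using sum_eq_1_iff[OF assms(1), of "\<lambda>i. c i - 1"] by blast
  moreover have "c k = 2"
    using k(2) by simp
  moreover have "\<forall>i\<in>I. i \<noteq> k \<longrightarrow> c i = 1"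
    using assms(2) k(3) by (fastforce intro: le_antisym)
  ultimately show ?thesis by blast
qed

lemma EFX_bundle_nonempty:
  assumes "EFX n v A" "i < n" "j < n" "finite (A j)" "2 \<le> card (A j)"
    and positive: "\<And>S. S \<noteq> {} \<Longrightarrow> S \<subseteq> A j \<Longrightarrow> v i {} < v i S"
  shows "A i \<noteq> {}"
proof
  assume empty: "A i = {}"
  then have "i \<noteq> j"
    using assms(5) by auto
  obtain g where g: "g \<in> A j"
    using assms(5) by fastforce
  have "card (A j - {g}) = card (A j) - 1"
    using assms(4) g by simp
  then have "0 < card (A j - {g})"
    using assms(5) by simp
  then have "A j - {g} \<noteq> {}"
    by (simp add: card_gt_0_iff)
  then have "v i {} < v i (A j - {g})"
    by (intro positive) auto
  moreover have "v i (A j - {g}) \<le> v i (A i)"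
    using assms(1-3) \<open>i \<noteq> j\<close> g unfolding EFX_def by blast
  ultimately show False
    using empty by simp
qed

lemma EFX_allocation_one_pair:
  assumes "allocation n (n + 1) A" "EFX n v A"
    and positive: "\<And>i S. i < n \<Longrightarrow> S \<noteq> {} \<Longrightarrow> S \<subseteq> {0..<n + 1} \<Longrightarrow> v i {} < v i S"
  shows "\<exists>k<n. card (A k) = 2 \<and> (\<forall>i<n. i \<noteq> k \<longrightarrow> card (A i) = 1)"
proof -
  have sum: "(\<Sum>i<n. card (A i)) = Suc (card {..<n})"
    using allocation_sum_card[OF assms(1)] by simp
  have "\<exists>j<n. 2 \<le> card (A j)"
  proof (rule ccontr)
    assume "\<not> ?thesis"
    then have "(\<Sum>i<n. card (A i)) \<le> (\<Sum>i<n. 1)"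
      by (intro sum_mono) auto
    then show False
      using sum by simp
  qed
  then obtain j where "j < n" "2 \<le> card (A j)" by blast
  then have "\<forall>i\<in>{..<n}. 1 \<le> card (A i)"
    using assms(1,2) positive EFX_bundle_nonempty[of n v A _ j] allocation_finite_bundle[OF assms(1)]
    by (auto simp: allocation_def Suc_le_eq card_gt_0_iff)
  then show ?thesis
    using sum_eq_Suc_card_imp_one_pair[OF _ _ sum] by auto
qed

lemma EFX_allocation_with_pair:
  assumes mono: "\<forall>i<n. monotone_valuation {0..<n + 1} (v i)" and "k < n"
  shows "\<exists>A\<in>EFX_allocations n (n + 1) v. card (A k) = 2 \<and> (\<forall>i<n. i \<noteq> k \<longrightarrow> card (A i) = 1)"
proof -
  define I where "I = {..<n} - {k}"
  define G :: "nat set" where "G = {0..<n + 1}"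
  have card_I: "card I = n - 1"
    using \<open>k < n\<close> by (simp add: I_def)
  have "finite I" "finite G" "card I \<le> card G"
    using card_I by (simp_all add: I_def G_def)
  then obtain f where f: "inj_on f I" "f ` I \<subseteq> G"
    and prefers: "\<forall>i\<in>I. \<forall>g\<in>G - f ` I. v i {g} \<le> v i {f i}"
    using serial_dictatorship[of I G "\<lambda>i g. v i {g}"] by blast
  define R where "R = G - f ` I"
  have card_R: "card R = 2"
  proof -
    have "card (f ` I) = n - 1"
      using f(1) card_I by (simp add: card_image)
    then show ?thesis
      using f(2) \<open>k < n\<close> by (simp add: R_def G_def card_Diff_subset finite_subset)
  qed
  define A where "A i = (if i = k then R else if i \<in> I then {f i} else {})" for i
  have "allocation n (n + 1) A"
  proof -
    have "G \<subseteq> (\<Union>i<n. A i)"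
      using \<open>k < n\<close> by (auto simp: A_def R_def I_def)
    then show ?thesis
      using f \<open>k < n\<close> unfolding allocation_def
      by (auto simp: A_def R_def I_def G_def inj_on_eq_iff)
  qed
  moreover have "EFX n v A"
    unfolding EFX_def
  proof (intro allI impI ballI)
    fix i j g
    assume ij: "i < n" "j < n" "i \<noteq> j" and g: "g \<in> A j"
    show "v i (A j - {g}) \<le> v i (A i)"
    proof (cases "j = k")
      case True
      then obtain h where h: "h \<in> R" "A j - {g} = {h}"
        using card_R g by (auto simp: A_def card_2_iff)
      have "i \<in> I"
        using ij True by (simp add: I_def)
      then have "A i = {f i}"
        using ij(3) True by (simp add: A_def)
      then show ?thesis
        using prefers \<open>i \<in> I\<close> h by (simp add: R_def)
    next
      case False
      then have empty: "A j - {g} = {}"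
        using g by (auto simp: A_def split: if_splits)
      have "A i \<subseteq> G"
        using f(2) by (auto simp: A_def R_def)
      then have "v i {} \<le> v i (A i)"
        using mono ij(1) unfolding monotone_valuation_def G_def by blast
      then show ?thesis
        by (simp only: empty)
    qed
  qed
  moreover have "card (A k) = 2" "\<forall>i<n. i \<noteq> k \<longrightarrow> card (A i) = 1"
    using card_R by (auto simp: A_def I_def)
  ultimately show ?thesis
    unfolding EFX_allocations_def by blast
qed

lemma card_EFX_allocations_ge:
  assumes "\<forall>i<n. monotone_valuation {0..<n + 1} (v i)"
  shows "n \<le> card (EFX_allocations n (n + 1) v)"
proof -
  obtain P where P: "\<And>k. k < n \<Longrightarrow> P k \<in> EFX_allocations n (n + 1) v"
    and pair: "\<And>k. k < n \<Longrightarrow> card (P k k) = 2"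
    and singletons: "\<And>k i. k < n \<Longrightarrow> i < n \<Longrightarrow> i \<noteq> k \<Longrightarrow> card (P k i) = 1"
    using EFX_allocation_with_pair[OF assms] by metis
  have "inj_on P {..<n}"
  proof (rule inj_onI)
    fix a b
    assume "a \<in> {..<n}" "b \<in> {..<n}" "P a = P b"
    then show "a = b"
      using pair[of a] singletons[of b a] by (cases "a = b") auto
  qed
  then have "card {..<n} \<le> card (EFX_allocations n (n + 1) v)"
    using P finite_EFX_allocations by (intro card_inj_on_le) auto
  then show ?thesis
    by simp
qed

definition extremal_weight :: "nat \<Rightarrow> nat \<Rightarrow> nat \<Rightarrow> real" where
  "extremal_weight n i g = (if g = i then 3 else if g = n then 2 else 1)"

definition extremal_valuation :: "nat \<Rightarrow> nat \<Rightarrow> nat set \<Rightarrow> real" where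
  "extremal_valuation n i S = (\<Sum>g\<in>S. extremal_weight n i g)"

definition paired_allocation :: "nat \<Rightarrow> nat \<Rightarrow> nat \<Rightarrow> nat set" where
  "paired_allocation n k i = (if i = k then {k, n} else if i < n then {i} else {})"

lemma additive_extremal_valuation: "additive_valuation M (extremal_valuation n i)"
  by (auto simp: additive_valuation_def extremal_valuation_def extremal_weight_def)

lemma extremal_valuation_singleton [simp]: "extremal_valuation n i {g} = extremal_weight n i g"
  by (simp add: extremal_valuation_def)

lemma extremal_valuation_positive:
  assumes "finite S" "S \<noteq> {}"
  shows "extremal_valuation n i {} < extremal_valuation n i S"
  using assms unfolding extremal_valuation_def
  by (simp add: sum_pos extremal_weight_def)

lemma paired_allocation_EFX:
  assumes "k < n"
  shows "paired_allocation n k \<in> EFX_allocations n (n + 1) (extremal_valuation n)"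
proof -
  have "allocation n (n + 1) (paired_allocation n k)"
    using assms unfolding allocation_def paired_allocation_def
    by (auto simp: less_Suc_eq)
  moreover have "EFX n (extremal_valuation n) (paired_allocation n k)"
    using assms
    by (auto simp: EFX_def paired_allocation_def extremal_valuation_def extremal_weight_def insert_Diff_if)
  ultimately show ?thesis
    by (simp add: EFX_allocations_def)
qed

lemma EFX_allocation_extremal_is_paired:
  assumes "A \<in> EFX_allocations n (n + 1) (extremal_valuation n)"
  shows "\<exists>k<n. A = paired_allocation n k"
proof -
  have alloc: "allocation n (n + 1) A" and efx: "EFX n (extremal_valuation n) A"
    using assms by (auto simp: EFX_allocations_def)
  have envy_free: "extremal_valuation n i (A j - {g}) \<le> extremal_valuation n i (A i)"
    if "i < n" "j < n" "i \<noteq> j" "g \<in> A j" for i j g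
    using efx that unfolding EFX_def by blast
  have disjoint: "A i \<inter> A j = {}" if "i < n" "j < n" "i \<noteq> j" for i j
    using alloc that unfolding allocation_def by blast
  have goods: "A i \<subseteq> {0..<n + 1}" for i
    using alloc unfolding allocation_def by (cases "i < n") auto
  have "extremal_valuation n i {} < extremal_valuation n i S"
    if "S \<noteq> {}" "S \<subseteq> {0..<n + 1}" for i S
    using that by (intro extremal_valuation_positive) (auto intro: finite_subset)
  then obtain k where k: "k < n" "card (A k) = 2"
    and "\<forall>i<n. i \<noteq> k \<longrightarrow> card (A i) = 1"
    using EFX_allocation_one_pair[OF alloc efx] by blast
  then have singleton: "\<exists>x. A i = {x}" if "i < n" "i \<noteq> k" for i
    using that by (simp add: card_1_singleton_iff)
  have "A k \<subseteq> {k, n}"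
  proof
    fix h
    assume h: "h \<in> A k"
    show "h \<in> {k, n}"
    proof (rule ccontr)
      assume "h \<notin> {k, n}"
      then have "h < n" "h \<noteq> k"
        using goods[of k] h by auto
      obtain g where "g \<in> A k" "g \<noteq> h"
        using k(2) h by (auto simp: card_2_iff)
      moreover from this have "A k - {g} = {h}"
        using k(2) h by (auto simp: card_2_iff)
      ultimately have "extremal_weight n h h \<le> extremal_valuation n h (A h)"
        using envy_free[of h k g] \<open>h < n\<close> \<open>h \<noteq> k\<close> k(1) by simp
      moreover obtain x where "A h = {x}"
        using singleton \<open>h < n\<close> \<open>h \<noteq> k\<close> by blast
      moreover have "x \<noteq> h"
        using disjoint[of h k] \<open>h < n\<close> \<open>h \<noteq> k\<close> k(1) h \<open>A h = {x}\<close> by auto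
      ultimately show False
        by (simp add: extremal_weight_def split: if_splits)
    qed
  qed
  then have pair: "A k = {k, n}"
    using k card_subset_eq[of "{k, n}" "A k"] by simp
  have singles: "A i = {i}" if i: "i < n" "i \<noteq> k" for i
  proof -
    obtain x where x: "A i = {x}"
      using singleton i by blast
    have "extremal_weight n i n \<le> extremal_weight n i x"
      using envy_free[of i k k] i k(1) pair x by (simp add: insert_Diff_if)
    moreover have "x \<noteq> n"
      using disjoint[of i k] i k(1) pair x by auto
    ultimately show ?thesis
      using x by (simp add: extremal_weight_def split: if_splits)
  qed
  have "A = paired_allocation n k"
  proof
    fix i
    show "A i = paired_allocation n k i"
      using singles pair alloc k(1)
      by (cases "i < n") (auto simp: allocation_def paired_allocation_def)
  qed
  then show ?thesis
    using k(1) by blast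
qed

lemma card_EFX_allocations_extremal:
  "card (EFX_allocations n (n + 1) (extremal_valuation n)) = n"
proof -
  have "EFX_allocations n (n + 1) (extremal_valuation n) = paired_allocation n ` {..<n}"
    using EFX_allocation_extremal_is_paired paired_allocation_EFX by blast
  moreover have "inj_on (paired_allocation n) {..<n}"
  proof (rule inj_onI)
    fix a b
    assume "a \<in> {..<n}" "paired_allocation n a = paired_allocation n b"
    then have "paired_allocation n a a = paired_allocation n b a"
      by simp
    with \<open>a \<in> {..<n}\<close> show "a = b"
      by (auto simp: paired_allocation_def split: if_splits)
  qed
  ultimately show ?thesis
    by (simp add: card_image)
qed

theorem proposition4:
  fixes n m :: nat
  assumes "m = n + 1"
  shows "(\<forall>v :: nat \<Rightarrow> nat set \<Rightarrow> real.
            (\<forall>i<n. monotone_valuation {0..<m} (v i)) \<longrightarrow> card (EFX_allocations n m v) \<ge> n)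
       \<and> (\<exists>v :: nat \<Rightarrow> nat set \<Rightarrow> real.
            (\<forall>i<n. additive_valuation {0..<m} (v i)) \<and> card (EFX_allocations n m v) = n)"
proof
  show "\<forall>v. (\<forall>i<n. monotone_valuation {0..<m} (v i)) \<longrightarrow> n \<le> card (EFX_allocations n m v)"
    using assms card_EFX_allocations_ge by blast
  show "\<exists>v. (\<forall>i<n. additive_valuation {0..<m} (v i)) \<and> card (EFX_allocations n m v) = n"
    using assms card_EFX_allocations_extremal additive_extremal_valuation by blast
qed

end
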